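(* Let $B\subseteq A$ be a Frobenius extension of rings whose Frobenius homomorphism $E:A\to B$ is surjective, and let $P$ be a progenerator right $A$-module. Then the natural inclusion $\mathrm{End}\,P_A\hookrightarrow\mathrm{End}\,P_B$ is a Frobenius extension.
   Context: A ring extension $B\subseteq A$ is a Frobenius extension if $A_B$ is finitely generated projective and there is a $B$-$B$-bimodule map $E:A\to B$ (the Frobenius homomorphism) and elements $x_i,y_i\in A$ with $\sum_iE(ax_i)y_i=a=\sum_ix_iE(y_ia)$ for all $a\in A$. A progenerator is a finitely generated projective generator. $\mathrm{End}\,P_B$ denotes endomorphisms of $P$ regarded as a right $B$-module by restriction. *)

theory Defs
  imports "HOL-Algebra.Algebra"
begin

text \<open>The additive group of the module is the additive part of a ring record M;
  the scalar action is an explicit function act (m r written act m r).\<close>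

definition right_module :: "'r ring \<Rightarrow> 'm ring \<Rightarrow> ('m \<Rightarrow> 'r \<Rightarrow> 'm) \<Rightarrow> bool" where
  "right_module R M act \<longleftrightarrow> ring R \<and> abelian_group M \<and>
     (\<forall>m\<in>carrier M. \<forall>r\<in>carrier R. act m r \<in> carrier M) \<and>
     (\<forall>m\<in>carrier M. \<forall>n\<in>carrier M. \<forall>r\<in>carrier R. act (m \<oplus>\<^bsub>M\<^esub> n) r = act m r \<oplus>\<^bsub>M\<^esub> act n r) \<and>
     (\<forall>m\<in>carrier M. \<forall>r\<in>carrier R. \<forall>s\<in>carrier R. act m (r \<oplus>\<^bsub>R\<^esub> s) = act m r \<oplus>\<^bsub>M\<^esub> act m s) \<and>
     (\<forall>m\<in>carrier M. \<forall>r\<in>carrier R. \<forall>s\<in>carrier R. act m (r \<otimes>\<^bsub>R\<^esub> s) = act (act m r) s) \<and>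
     (\<forall>m\<in>carrier M. act m \<one>\<^bsub>R\<^esub> = m)"

definition rmod_hom :: "'r ring \<Rightarrow> 'm ring \<Rightarrow> ('m \<Rightarrow> 'r \<Rightarrow> 'm) \<Rightarrow> 'n ring \<Rightarrow> ('n \<Rightarrow> 'r \<Rightarrow> 'n)
    \<Rightarrow> ('m \<Rightarrow> 'n) \<Rightarrow> bool" where
  "rmod_hom R M actM N actN f \<longleftrightarrow> f \<in> carrier M \<rightarrow> carrier N \<and>
     (\<forall>x\<in>carrier M. \<forall>y\<in>carrier M. f (x \<oplus>\<^bsub>M\<^esub> y) = f x \<oplus>\<^bsub>N\<^esub> f y) \<and>
     (\<forall>x\<in>carrier M. \<forall>r\<in>carrier R. f (actM x r) = actN (f x) r)"

definition fg_projective :: "'r ring \<Rightarrow> 'm ring \<Rightarrow> ('m \<Rightarrow> 'r \<Rightarrow> 'm) \<Rightarrow> bool" where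
  "fg_projective R M act \<longleftrightarrow> (\<exists>(n::nat) x f.
     (\<forall>i<n. x i \<in> carrier M \<and> rmod_hom R M act R (\<otimes>\<^bsub>R\<^esub>) (f i)) \<and>
     (\<forall>m\<in>carrier M. m = (\<Oplus>\<^bsub>M\<^esub> i\<in>{..<n}. act (x i) (f i m))))"

text \<open>Generator: R_R is an epimorphic image of a finite direct sum M^n.\<close>
definition generator :: "'r ring \<Rightarrow> 'm ring \<Rightarrow> ('m \<Rightarrow> 'r \<Rightarrow> 'm) \<Rightarrow> bool" where
  "generator R M act \<longleftrightarrow> (\<exists>(n::nat) f.
     (\<forall>i<n. rmod_hom R M act R (\<otimes>\<^bsub>R\<^esub>) (f i)) \<and>
     (\<forall>r\<in>carrier R. \<exists>m. (\<forall>i<n. m i \<in> carrier M) \<and> r = (\<Oplus>\<^bsub>R\<^esub> i\<in>{..<n}. f i (m i))))"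

definition progenerator :: "'r ring \<Rightarrow> 'm ring \<Rightarrow> ('m \<Rightarrow> 'r \<Rightarrow> 'm) \<Rightarrow> bool" where
  "progenerator R M act \<longleftrightarrow> right_module R M act \<and> fg_projective R M act \<and> generator R M act"

definition frobenius_hom :: "'a ring \<Rightarrow> 'a set \<Rightarrow> ('a \<Rightarrow> 'a) \<Rightarrow> bool" where
  "frobenius_hom A B E \<longleftrightarrow> E \<in> carrier A \<rightarrow> B \<and>
     (\<forall>a\<in>carrier A. \<forall>a'\<in>carrier A. E (a \<oplus>\<^bsub>A\<^esub> a') = E a \<oplus>\<^bsub>A\<^esub> E a') \<and>
     (\<forall>b\<in>B. \<forall>a\<in>carrier A. E (b \<otimes>\<^bsub>A\<^esub> a) = b \<otimes>\<^bsub>A\<^esub> E a) \<and>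
     (\<forall>b\<in>B. \<forall>a\<in>carrier A. E (a \<otimes>\<^bsub>A\<^esub> b) = E a \<otimes>\<^bsub>A\<^esub> b) \<and>
     (\<exists>(n::nat) x y. (\<forall>i<n. x i \<in> carrier A \<and> y i \<in> carrier A) \<and>
        (\<forall>a\<in>carrier A. (\<Oplus>\<^bsub>A\<^esub> i\<in>{..<n}. E (a \<otimes>\<^bsub>A\<^esub> x i) \<otimes>\<^bsub>A\<^esub> y i) = a \<and>
                        (\<Oplus>\<^bsub>A\<^esub> i\<in>{..<n}. x i \<otimes>\<^bsub>A\<^esub> E (y i \<otimes>\<^bsub>A\<^esub> a)) = a))"

definition frobenius_ext :: "'a ring \<Rightarrow> 'a set \<Rightarrow> bool" where
  "frobenius_ext A B \<longleftrightarrow> ring A \<and> subring B A \<and>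
     fg_projective (A\<lparr>carrier := B\<rparr>) A (\<otimes>\<^bsub>A\<^esub>) \<and>
     (\<exists>E. frobenius_hom A B E)"

definition end_ring :: "'r ring \<Rightarrow> 'm ring \<Rightarrow> ('m \<Rightarrow> 'r \<Rightarrow> 'm) \<Rightarrow> ('m \<Rightarrow> 'm) ring" where
  "end_ring R M act = \<lparr>carrier = {f. rmod_hom R M act M act f \<and> f \<in> extensional (carrier M)},
     monoid.mult = (\<lambda>f g. compose (carrier M) f g),
     monoid.one = (\<lambda>x\<in>carrier M. x),
     ring.zero = (\<lambda>x\<in>carrier M. \<zero>\<^bsub>M\<^esub>),
     ring.add = (\<lambda>f g. \<lambda>x\<in>carrier M. f x \<oplus>\<^bsub>M\<^esub> g x)\<rparr>"

end

(*
  The Frobenius homomorphism E, with dual bases x_l, y_l, induces the trace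
  s \<mapsto> (p \<mapsto> \<Sum>_l s(p x_l) y_l) from End P_B to End P_A; it is End P_A-bilinear for
  every right A-module P.  If P has a dual basis (p_j, \<phi>_j) and
  \<Sum>_k \<psi>_k(q_k) = 1 with \<psi>_k \<in> Hom(P_A, A_A), then the B-linear maps
  X_{jik} = p_j x_i E(\<psi>_k -) and Y_{jik} = q_k E(y_i \<phi>_j -) are dual bases for the
  trace.  Both dual-basis identities reduce to  \<Sum>_t X_t(Y_t(w) b) = w E(b),
  which collapses the sums over k (generator), i (dual bases of E) and j
  (dual basis of P) in turn.
*)

theory Submission
  imports Defs
begin

definition additive_hom :: "('a, 'c) ring_scheme \<Rightarrow> ('b, 'd) ring_scheme \<Rightarrow> ('a \<Rightarrow> 'b) \<Rightarrow> bool" where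
  "additive_hom M N h \<longleftrightarrow> h \<in> carrier M \<rightarrow> carrier N \<and>
     (\<forall>a\<in>carrier M. \<forall>b\<in>carrier M. h (a \<oplus>\<^bsub>M\<^esub> b) = h a \<oplus>\<^bsub>N\<^esub> h b)"

lemma additive_hom_zero:
  assumes "abelian_group M" "abelian_group N" "additive_hom M N h"
  shows "h \<zero>\<^bsub>M\<^esub> = \<zero>\<^bsub>N\<^esub>"
proof -
  interpret M: abelian_group M by fact
  interpret N: abelian_group N by fact
  have h0: "h \<zero>\<^bsub>M\<^esub> \<in> carrier N" using assms(3) unfolding additive_hom_def by auto
  have "h \<zero>\<^bsub>M\<^esub> \<oplus>\<^bsub>N\<^esub> h \<zero>\<^bsub>M\<^esub> = h \<zero>\<^bsub>M\<^esub> \<oplus>\<^bsub>N\<^esub> \<zero>\<^bsub>N\<^esub>"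
    using assms(3) h0 unfolding additive_hom_def by (metis M.l_zero M.zero_closed N.r_zero)
  then show ?thesis using h0 by (metis N.add.l_cancel N.zero_closed)
qed

lemma additive_hom_finsum:
  assumes M: "abelian_group M" and N: "abelian_group N" and h: "additive_hom M N h"
    and "finite I" "f \<in> I \<rightarrow> carrier M"
  shows "h (finsum M f I) = (\<Oplus>\<^bsub>N\<^esub> i\<in>I. h (f i))"
  using assms(4,5)
proof (induction I rule: finite_induct)
  case empty
  then show ?case
    using additive_hom_zero[OF M N h] by (simp add: M N abelian_group.axioms(1) abelian_monoid.finsum_empty)
next
  case (insert i I)
  interpret M: abelian_group M by fact
  interpret N: abelian_group N by fact
  have "h (finsum M f (insert i I)) = h (f i) \<oplus>\<^bsub>N\<^esub> h (finsum M f I)"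
    using h insert unfolding additive_hom_def by (auto intro: M.finsum_closed)
  then show ?case
    using h insert unfolding additive_hom_def by (auto simp: Pi_def)
qed

lemma (in abelian_monoid) finsum_swap:
  assumes "finite I" "finite J" "\<And>i j. i \<in> I \<Longrightarrow> j \<in> J \<Longrightarrow> f i j \<in> carrier G"
  shows "(\<Oplus>i\<in>I. \<Oplus>j\<in>J. f i j) = (\<Oplus>j\<in>J. \<Oplus>i\<in>I. f i j)"
  using assms(1,3)
proof (induction I rule: finite_induct)
  case empty
  then show ?case by simp
next
  case (insert a I)
  have "(\<Oplus>i\<in>insert a I. \<Oplus>j\<in>J. f i j) = (\<Oplus>j\<in>J. f a j) \<oplus> (\<Oplus>j\<in>J. \<Oplus>i\<in>I. f i j)"
    using insert assms(2) by (subst finsum_insert) (auto intro!: finsum_closed)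
  also have "\<dots> = (\<Oplus>j\<in>J. f a j \<oplus> (\<Oplus>i\<in>I. f i j))"
    using insert assms(2) by (subst finsum_addf) (auto intro!: finsum_closed)
  also have "\<dots> = (\<Oplus>j\<in>J. \<Oplus>i\<in>insert a I. f i j)"
    using insert assms(2) by (intro finsum_cong') (auto intro!: finsum_closed)
  finally show ?case .
qed

lemma (in abelian_monoid) finsum_Times:
  assumes "finite I" "finite J" "\<And>i j. i \<in> I \<Longrightarrow> j \<in> J \<Longrightarrow> f i j \<in> carrier G"
  shows "finsum G (\<lambda>(i, j). f i j) (I \<times> J) = (\<Oplus>i\<in>I. \<Oplus>j\<in>J. f i j)"
  using assms(1,3)
proof (induction I rule: finite_induct)
  case empty
  then show ?case by simp
next
  case (insert a I)
  have "insert a I \<times> J = Pair a ` J \<union> I \<times> J" by auto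
  then have "finsum G (\<lambda>(i, j). f i j) (insert a I \<times> J) = finsum G (\<lambda>(i, j). f i j) (Pair a ` J) \<oplus> finsum G (\<lambda>(i, j). f i j) (I \<times> J)"
    using insert assms(2) by (simp only:) (rule finsum_Un_disjoint; auto)
  also have "finsum G (\<lambda>(i, j). f i j) (Pair a ` J) = (\<Oplus>j\<in>J. f a j)"
    using insert by (subst finsum_reindex) (auto simp: inj_on_def)
  finally show ?case using insert assms(2)
    by (subst finsum_insert) (auto intro!: finsum_closed)
qed

lemma right_module_additive_hom_left:
  "right_module R M act \<Longrightarrow> r \<in> carrier R \<Longrightarrow> additive_hom M M (\<lambda>m. act m r)"
  unfolding right_module_def additive_hom_def by auto

lemma right_module_additive_hom_right:
  "right_module R M act \<Longrightarrow> m \<in> carrier M \<Longrightarrow> additive_hom R M (act m)"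
  unfolding right_module_def additive_hom_def by auto

lemma right_module_subring:
  assumes "right_module A M act" "subring B A"
  shows "right_module (A\<lparr>carrier := B\<rparr>) M act"
  using assms ring.subring_is_ring[of A B] subringE(1)[OF assms(2)]
  unfolding right_module_def by (auto simp: subset_eq)

lemma right_module_act_zero:
  assumes M: "right_module R M act" and r: "r \<in> carrier R"
  shows "act \<zero>\<^bsub>M\<^esub> r = \<zero>\<^bsub>M\<^esub>"
proof -
  have "abelian_group M" using M unfolding right_module_def by blast
  then show ?thesis using additive_hom_zero right_module_additive_hom_left[OF M r] by blast
qed

lemma right_module_act_neg:
  assumes M: "right_module R M act" and m: "m \<in> carrier M" and r: "r \<in> carrier R"
  shows "act (\<ominus>\<^bsub>M\<^esub> m) r = \<ominus>\<^bsub>M\<^esub> act m r"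
proof -
  interpret M: abelian_group M using M unfolding right_module_def by blast
  have h: "additive_hom M M (\<lambda>m. act m r)" by (rule right_module_additive_hom_left[OF M r])
  then have "act (\<ominus>\<^bsub>M\<^esub> m) r \<oplus>\<^bsub>M\<^esub> act m r = \<zero>\<^bsub>M\<^esub>"
    using m right_module_act_zero[OF M r] unfolding additive_hom_def by (metis M.a_inv_closed M.l_neg)
  moreover have "act m r \<in> carrier M" "act (\<ominus>\<^bsub>M\<^esub> m) r \<in> carrier M"
    using h m unfolding additive_hom_def by auto
  ultimately show ?thesis by (rule M.minus_equality[symmetric])
qed

lemma carrier_end_ring:
  "f \<in> carrier (end_ring R M act) \<longleftrightarrow> rmod_hom R M act M act f \<and> f \<in> extensional (carrier M)"
  by (simp add: end_ring_def)

lemma end_ring_apply_closed: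
  "f \<in> carrier (end_ring R M act) \<Longrightarrow> m \<in> carrier M \<Longrightarrow> f m \<in> carrier M"
  by (auto simp: carrier_end_ring rmod_hom_def)

lemma end_ring_mult_apply: "m \<in> carrier M \<Longrightarrow> (f \<otimes>\<^bsub>end_ring R M act\<^esub> g) m = f (g m)"
  by (simp add: end_ring_def compose_def)

lemma end_ring_add_apply: "m \<in> carrier M \<Longrightarrow> (f \<oplus>\<^bsub>end_ring R M act\<^esub> g) m = f m \<oplus>\<^bsub>M\<^esub> g m"
  by (simp add: end_ring_def)

lemma end_ring_eqI:
  "f \<in> carrier (end_ring R M act) \<Longrightarrow> g \<in> carrier (end_ring R M act) \<Longrightarrow>
    (\<And>m. m \<in> carrier M \<Longrightarrow> f m = g m) \<Longrightarrow> f = g"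
  by (auto simp: carrier_end_ring intro: extensionalityI)

lemma ring_end_ring:
  assumes M: "right_module R M act"
  shows "ring (end_ring R M act)" (is "ring ?E")
proof -
  interpret M: abelian_group M using M unfolding right_module_def by blast
  have closed: "\<And>m r. m \<in> carrier M \<Longrightarrow> r \<in> carrier R \<Longrightarrow> act m r \<in> carrier M"
    and distrib: "\<And>m m' r. m \<in> carrier M \<Longrightarrow> m' \<in> carrier M \<Longrightarrow> r \<in> carrier R \<Longrightarrow>
        act (m \<oplus>\<^bsub>M\<^esub> m') r = act m r \<oplus>\<^bsub>M\<^esub> act m' r"
    using M unfolding right_module_def by blast+
  note defs = end_ring_def rmod_hom_def compose_def Pi_def
  note act = closed distrib right_module_act_zero[OF M] right_module_act_neg[OF M]
  show ?thesis
  proof (rule ringI)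
    show "abelian_group ?E"
    proof (rule abelian_groupI)
      fix f assume f: "f \<in> carrier ?E"
      show "\<exists>g\<in>carrier ?E. g \<oplus>\<^bsub>?E\<^esub> f = \<zero>\<^bsub>?E\<^esub>"
      proof
        show "(\<lambda>m\<in>carrier M. \<ominus>\<^bsub>M\<^esub> f m) \<in> carrier ?E"
          using f by (auto simp: defs M.minus_add act)
        show "(\<lambda>m\<in>carrier M. \<ominus>\<^bsub>M\<^esub> f m) \<oplus>\<^bsub>?E\<^esub> f = \<zero>\<^bsub>?E\<^esub>"
          using f by (auto simp: defs M.l_neg intro!: restrict_ext)
      qed
    qed (auto simp: defs act M.a_ac extensional_def)
    show "monoid ?E"
      by (rule monoidI) (auto simp: defs act extensional_def)
  qed (auto simp: defs act)
qed

lemma carrier_end_ring_subset: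
  assumes "subring B A"
  shows "carrier (end_ring A M act) \<subseteq> carrier (end_ring (A\<lparr>carrier := B\<rparr>) M act)"
  using subringE(1)[OF assms] by (auto simp: carrier_end_ring rmod_hom_def subset_iff)

lemma subring_end_ring:
  assumes M: "right_module A M act" and B: "subring B A"
  shows "subring (carrier (end_ring A M act)) (end_ring (A\<lparr>carrier := B\<rparr>) M act)"
    (is "subring (carrier ?T) ?S")
proof -
  interpret S: ring ?S by (rule ring_end_ring[OF right_module_subring[OF M B]])
  interpret T: ring ?T by (rule ring_end_ring[OF M])
  have ops: "monoid.mult ?S = monoid.mult ?T" "ring.add ?S = ring.add ?T" "\<one>\<^bsub>?S\<^esub> = \<one>\<^bsub>?T\<^esub>"
    "\<zero>\<^bsub>?S\<^esub> = \<zero>\<^bsub>?T\<^esub>"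
    by (simp_all add: end_ring_def)
  show ?thesis
  proof (rule S.subringI)
    show "carrier ?T \<subseteq> carrier ?S" by (rule carrier_end_ring_subset[OF B])
    show "\<one>\<^bsub>?S\<^esub> \<in> carrier ?T" by (simp add: ops)
  next
    fix h assume h: "h \<in> carrier ?T"
    have "\<ominus>\<^bsub>?T\<^esub> h \<oplus>\<^bsub>?S\<^esub> h = \<zero>\<^bsub>?S\<^esub>" using T.l_neg[OF h] by (simp add: ops)
    then have "\<ominus>\<^bsub>?S\<^esub> h = \<ominus>\<^bsub>?T\<^esub> h"
      by (rule S.minus_equality) (use h T.a_inv_closed[OF h] carrier_end_ring_subset[OF B, of M act] in blast)+
    then show "\<ominus>\<^bsub>?S\<^esub> h \<in> carrier ?T" using T.a_inv_closed[OF h] by simp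
  next
    fix h1 h2 assume "h1 \<in> carrier ?T" "h2 \<in> carrier ?T"
    then show "h1 \<otimes>\<^bsub>?S\<^esub> h2 \<in> carrier ?T" "h1 \<oplus>\<^bsub>?S\<^esub> h2 \<in> carrier ?T"
      by (simp_all add: ops T.m_closed T.a_closed)
  qed
qed

lemma end_ring_finsum_apply:
  assumes M: "right_module R M act" and "finite I" "f \<in> I \<rightarrow> carrier (end_ring R M act)"
    and m: "m \<in> carrier M"
  shows "finsum (end_ring R M act) f I m = (\<Oplus>\<^bsub>M\<^esub> i\<in>I. f i m)"
proof -
  have "additive_hom (end_ring R M act) M (\<lambda>f. f m)"
    using m by (auto simp: additive_hom_def end_ring_apply_closed end_ring_add_apply)
  then show ?thesis
    using assms ring.is_abelian_group[OF ring_end_ring[OF M]] additive_hom_finsum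
    unfolding right_module_def by blast
qed

lemma frobenius_homI:
  assumes R: "ring R" and B: "B \<subseteq> carrier R" and EB: "E \<in> carrier R \<rightarrow> B"
    and add: "\<And>a a'. a \<in> carrier R \<Longrightarrow> a' \<in> carrier R \<Longrightarrow> E (a \<oplus>\<^bsub>R\<^esub> a') = E a \<oplus>\<^bsub>R\<^esub> E a'"
    and left: "\<And>b a. b \<in> B \<Longrightarrow> a \<in> carrier R \<Longrightarrow> E (b \<otimes>\<^bsub>R\<^esub> a) = b \<otimes>\<^bsub>R\<^esub> E a"
    and right: "\<And>b a. b \<in> B \<Longrightarrow> a \<in> carrier R \<Longrightarrow> E (a \<otimes>\<^bsub>R\<^esub> b) = E a \<otimes>\<^bsub>R\<^esub> b"
    and I: "finite I" and u: "u \<in> I \<rightarrow> carrier R" and v: "v \<in> I \<rightarrow> carrier R"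
    and dual_left: "\<And>a. a \<in> carrier R \<Longrightarrow> (\<Oplus>\<^bsub>R\<^esub> i\<in>I. E (a \<otimes>\<^bsub>R\<^esub> u i) \<otimes>\<^bsub>R\<^esub> v i) = a"
    and dual_right: "\<And>a. a \<in> carrier R \<Longrightarrow> (\<Oplus>\<^bsub>R\<^esub> i\<in>I. u i \<otimes>\<^bsub>R\<^esub> E (v i \<otimes>\<^bsub>R\<^esub> a)) = a"
  shows "frobenius_hom R B E"
proof -
  interpret R: ring R by fact
  obtain h where "bij_betw h {..<card I} I"
    using ex_bij_betw_nat_finite[OF I] by (auto simp: atLeast0LessThan)
  then have h: "inj_on h {..<card I}" "h ` {..<card I} = I" by (auto simp: bij_betw_def)
  have reindex: "(\<Oplus>\<^bsub>R\<^esub> i\<in>{..<card I}. f (h i)) = (\<Oplus>\<^bsub>R\<^esub> i\<in>I. f i)"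
    if "f \<in> I \<rightarrow> carrier R" for f
    using R.finsum_reindex[of f h, OF _ h(1)] that h(2) by simp
  have E: "E a \<in> carrier R" if "a \<in> carrier R" for a using EB B that by auto
  have closed: "(\<lambda>i. E (a \<otimes>\<^bsub>R\<^esub> u i) \<otimes>\<^bsub>R\<^esub> v i) \<in> I \<rightarrow> carrier R"
    "(\<lambda>i. u i \<otimes>\<^bsub>R\<^esub> E (v i \<otimes>\<^bsub>R\<^esub> a)) \<in> I \<rightarrow> carrier R" if "a \<in> carrier R" for a
    using that u v E by (auto intro!: R.m_closed)
  have dual: "\<forall>a\<in>carrier R. (\<Oplus>\<^bsub>R\<^esub> i\<in>{..<card I}. E (a \<otimes>\<^bsub>R\<^esub> u (h i)) \<otimes>\<^bsub>R\<^esub> v (h i)) = a \<and>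
      (\<Oplus>\<^bsub>R\<^esub> i\<in>{..<card I}. u (h i) \<otimes>\<^bsub>R\<^esub> E (v (h i) \<otimes>\<^bsub>R\<^esub> a)) = a"
    using reindex[OF closed(1)] reindex[OF closed(2)] dual_left dual_right by simp
  have "\<forall>i<card I. u (h i) \<in> carrier R \<and> v (h i) \<in> carrier R"
    using u v h(2) by auto
  with dual have "\<exists>(n::nat) x y. (\<forall>i<n. x i \<in> carrier R \<and> y i \<in> carrier R) \<and>
      (\<forall>a\<in>carrier R. (\<Oplus>\<^bsub>R\<^esub> i\<in>{..<n}. E (a \<otimes>\<^bsub>R\<^esub> x i) \<otimes>\<^bsub>R\<^esub> y i) = a \<and>
        (\<Oplus>\<^bsub>R\<^esub> i\<in>{..<n}. x i \<otimes>\<^bsub>R\<^esub> E (y i \<otimes>\<^bsub>R\<^esub> a)) = a)"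
    by (intro exI[of _ "card I"] exI[of _ "\<lambda>i. u (h i)"] exI[of _ "\<lambda>i. v (h i)"]) simp
  then show ?thesis
    unfolding frobenius_hom_def using EB add left right by (intro conjI ballI)
qed

lemma fg_projective_if_frobenius_hom:
  assumes R: "ring R" and B: "subring B R" and E: "frobenius_hom R B E"
  shows "fg_projective (R\<lparr>carrier := B\<rparr>) R (\<otimes>\<^bsub>R\<^esub>)"
proof -
  interpret R: ring R by fact
  have Bc: "B \<subseteq> carrier R" using subringE(1)[OF B] .
  obtain n :: nat and x y where xy: "\<forall>i<n. x i \<in> carrier R \<and> y i \<in> carrier R"
    and dual: "\<forall>a\<in>carrier R. (\<Oplus>\<^bsub>R\<^esub> i\<in>{..<n}. x i \<otimes>\<^bsub>R\<^esub> E (y i \<otimes>\<^bsub>R\<^esub> a)) = a"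
    using E unfolding frobenius_hom_def by blast
  have EB: "E \<in> carrier R \<rightarrow> B"
    and add: "\<forall>a\<in>carrier R. \<forall>a'\<in>carrier R. E (a \<oplus>\<^bsub>R\<^esub> a') = E a \<oplus>\<^bsub>R\<^esub> E a'"
    and right: "\<forall>b\<in>B. \<forall>a\<in>carrier R. E (a \<otimes>\<^bsub>R\<^esub> b) = E a \<otimes>\<^bsub>R\<^esub> b"
    using E unfolding frobenius_hom_def by auto
  have "rmod_hom (R\<lparr>carrier := B\<rparr>) R (\<otimes>\<^bsub>R\<^esub>) (R\<lparr>carrier := B\<rparr>) (\<otimes>\<^bsub>R\<^esub>) (\<lambda>a. E (y i \<otimes>\<^bsub>R\<^esub> a))"
    if "i < n" for i
    using xy that EB Bc unfolding rmod_hom_def by (auto simp: R.r_distr add R.m_assoc[symmetric] right)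
  then show ?thesis
    unfolding fg_projective_def using xy dual
    by (intro exI[of _ n] exI[of _ x] exI[of _ "\<lambda>i a. E (y i \<otimes>\<^bsub>R\<^esub> a)"]) simp
qed

lemma frobenius_ext_if_frobenius_hom:
  "ring R \<Longrightarrow> subring B R \<Longrightarrow> frobenius_hom R B E \<Longrightarrow> frobenius_ext R B"
  unfolding frobenius_ext_def using fg_projective_if_frobenius_hom by blast

locale frobenius_system =
  fixes A :: "'a ring" and B :: "'a set" and E :: "'a \<Rightarrow> 'a"
    and n :: nat and x :: "nat \<Rightarrow> 'a" and y :: "nat \<Rightarrow> 'a"
  assumes ring: "ring A" and subring: "subring B A"
    and E_closed: "E \<in> carrier A \<rightarrow> B"
    and E_add: "\<And>a a'. a \<in> carrier A \<Longrightarrow> a' \<in> carrier A \<Longrightarrow> E (a \<oplus>\<^bsub>A\<^esub> a') = E a \<oplus>\<^bsub>A\<^esub> E a'"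
    and E_left: "\<And>b a. b \<in> B \<Longrightarrow> a \<in> carrier A \<Longrightarrow> E (b \<otimes>\<^bsub>A\<^esub> a) = b \<otimes>\<^bsub>A\<^esub> E a"
    and E_right: "\<And>b a. b \<in> B \<Longrightarrow> a \<in> carrier A \<Longrightarrow> E (a \<otimes>\<^bsub>A\<^esub> b) = E a \<otimes>\<^bsub>A\<^esub> b"
    and x_closed: "\<And>i. i < n \<Longrightarrow> x i \<in> carrier A"
    and y_closed: "\<And>i. i < n \<Longrightarrow> y i \<in> carrier A"
    and dual_left: "\<And>a. a \<in> carrier A \<Longrightarrow> (\<Oplus>\<^bsub>A\<^esub> i\<in>{..<n}. E (a \<otimes>\<^bsub>A\<^esub> x i) \<otimes>\<^bsub>A\<^esub> y i) = a"
    and dual_right: "\<And>a. a \<in> carrier A \<Longrightarrow> (\<Oplus>\<^bsub>A\<^esub> i\<in>{..<n}. x i \<otimes>\<^bsub>A\<^esub> E (y i \<otimes>\<^bsub>A\<^esub> a)) = a"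

lemma frobenius_system_if_frobenius_hom:
  assumes "ring A" "subring B A" "frobenius_hom A B E"
  obtains n x y where "frobenius_system A B E n x y"
proof -
  obtain n :: nat and x y where "\<forall>i<n. x i \<in> carrier A \<and> y i \<in> carrier A"
    and "\<forall>a\<in>carrier A. (\<Oplus>\<^bsub>A\<^esub> i\<in>{..<n}. E (a \<otimes>\<^bsub>A\<^esub> x i) \<otimes>\<^bsub>A\<^esub> y i) = a \<and>
      (\<Oplus>\<^bsub>A\<^esub> i\<in>{..<n}. x i \<otimes>\<^bsub>A\<^esub> E (y i \<otimes>\<^bsub>A\<^esub> a)) = a"
    using assms(3) unfolding frobenius_hom_def by blast
  with assms have "frobenius_system A B E n x y"
    unfolding frobenius_system_def frobenius_hom_def by simp
  then show thesis by (rule that)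
qed

context frobenius_system
begin

sublocale A: ring A by (fact ring)

lemma B_subset: "B \<subseteq> carrier A"
  using subringE(1)[OF subring] .

lemma E_in_B [simp]: "a \<in> carrier A \<Longrightarrow> E a \<in> B"
  using E_closed by auto

lemma B_closed [simp]: "b \<in> B \<Longrightarrow> b \<in> carrier A"
  using B_subset by auto

declare x_closed [simp] y_closed [simp]

lemma dual_right_E_E:
  assumes a: "a \<in> carrier A" and b: "b \<in> carrier A"
  shows "(\<Oplus>\<^bsub>A\<^esub> i\<in>{..<n}. x i \<otimes>\<^bsub>A\<^esub> E (E (y i \<otimes>\<^bsub>A\<^esub> a) \<otimes>\<^bsub>A\<^esub> b)) = a \<otimes>\<^bsub>A\<^esub> E b"
proof -
  have "(\<Oplus>\<^bsub>A\<^esub> i\<in>{..<n}. x i \<otimes>\<^bsub>A\<^esub> E (E (y i \<otimes>\<^bsub>A\<^esub> a) \<otimes>\<^bsub>A\<^esub> b))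
      = (\<Oplus>\<^bsub>A\<^esub> i\<in>{..<n}. x i \<otimes>\<^bsub>A\<^esub> E (y i \<otimes>\<^bsub>A\<^esub> a) \<otimes>\<^bsub>A\<^esub> E b)"
    using a b by (intro A.finsum_cong') (simp_all add: E_left A.m_assoc)
  also have "\<dots> = (\<Oplus>\<^bsub>A\<^esub> i\<in>{..<n}. x i \<otimes>\<^bsub>A\<^esub> E (y i \<otimes>\<^bsub>A\<^esub> a)) \<otimes>\<^bsub>A\<^esub> E b"
    using a b by (simp add: A.finsum_ldistr Pi_def)
  finally show ?thesis using a by (simp add: dual_right)
qed

end

locale frobenius_module = frobenius_system +
  fixes P :: "'p ring" and act :: "'p \<Rightarrow> 'a \<Rightarrow> 'p"
  assumes module: "right_module A P act"
begin

abbreviation EndB :: "('p \<Rightarrow> 'p) ring" where "EndB \<equiv> end_ring (A\<lparr>carrier := B\<rparr>) P act"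
abbreviation EndA :: "('p \<Rightarrow> 'p) ring" where "EndA \<equiv> end_ring A P act"

sublocale P: abelian_group P
  using module unfolding right_module_def by blast

lemma act_closed [simp]: "p \<in> carrier P \<Longrightarrow> a \<in> carrier A \<Longrightarrow> act p a \<in> carrier P"
  using module unfolding right_module_def by blast

lemma act_assoc: "p \<in> carrier P \<Longrightarrow> a \<in> carrier A \<Longrightarrow> b \<in> carrier A \<Longrightarrow> act (act p a) b = act p (a \<otimes>\<^bsub>A\<^esub> b)"
  using module unfolding right_module_def by metis

lemma act_add_left:
  "p \<in> carrier P \<Longrightarrow> q \<in> carrier P \<Longrightarrow> a \<in> carrier A \<Longrightarrow> act (p \<oplus>\<^bsub>P\<^esub> q) a = act p a \<oplus>\<^bsub>P\<^esub> act q a"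
  using module unfolding right_module_def by blast

lemma act_add_right:
  "p \<in> carrier P \<Longrightarrow> a \<in> carrier A \<Longrightarrow> b \<in> carrier A \<Longrightarrow> act p (a \<oplus>\<^bsub>A\<^esub> b) = act p a \<oplus>\<^bsub>P\<^esub> act p b"
  using module unfolding right_module_def by blast

lemma act_one [simp]: "p \<in> carrier P \<Longrightarrow> act p \<one>\<^bsub>A\<^esub> = p"
  using module unfolding right_module_def by blast

lemma module_B: "right_module (A\<lparr>carrier := B\<rparr>) P act"
  by (rule right_module_subring[OF module subring])

lemma ring_EndB: "ring EndB"
  by (rule ring_end_ring[OF module_B])

lemma EndA_subset_EndB: "carrier EndA \<subseteq> carrier EndB"
  by (rule carrier_end_ring_subset[OF subring])

lemma EndB_apply_closed [simp]: "s \<in> carrier EndB \<Longrightarrow> p \<in> carrier P \<Longrightarrow> s p \<in> carrier P"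
  by (rule end_ring_apply_closed)

lemma EndB_add: "s \<in> carrier EndB \<Longrightarrow> p \<in> carrier P \<Longrightarrow> q \<in> carrier P \<Longrightarrow> s (p \<oplus>\<^bsub>P\<^esub> q) = s p \<oplus>\<^bsub>P\<^esub> s q"
  by (simp add: carrier_end_ring rmod_hom_def)

lemma EndA_act: "t \<in> carrier EndA \<Longrightarrow> p \<in> carrier P \<Longrightarrow> a \<in> carrier A \<Longrightarrow> t (act p a) = act (t p) a"
  by (simp add: carrier_end_ring rmod_hom_def)

lemma EndB_act: "s \<in> carrier EndB \<Longrightarrow> p \<in> carrier P \<Longrightarrow> b \<in> B \<Longrightarrow> s (act p b) = act (s p) b"
  by (simp add: carrier_end_ring rmod_hom_def)

lemma act_finsum_left:
  "finite I \<Longrightarrow> f \<in> I \<rightarrow> carrier P \<Longrightarrow> a \<in> carrier A \<Longrightarrow>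
    act (finsum P f I) a = (\<Oplus>\<^bsub>P\<^esub> i\<in>I. act (f i) a)"
  using additive_hom_finsum[OF P.abelian_group_axioms P.abelian_group_axioms
      right_module_additive_hom_left[OF module]] by blast

lemma act_finsum_right:
  "finite I \<Longrightarrow> f \<in> I \<rightarrow> carrier A \<Longrightarrow> p \<in> carrier P \<Longrightarrow>
    act p (finsum A f I) = (\<Oplus>\<^bsub>P\<^esub> i\<in>I. act p (f i))"
  using additive_hom_finsum[OF A.abelian_group_axioms P.abelian_group_axioms
      right_module_additive_hom_right[OF module]] by blast

lemma EndB_finsum:
  "s \<in> carrier EndB \<Longrightarrow> finite I \<Longrightarrow> f \<in> I \<rightarrow> carrier P \<Longrightarrow>
    s (finsum P f I) = (\<Oplus>\<^bsub>P\<^esub> i\<in>I. s (f i))"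
  by (rule additive_hom_finsum[OF P.abelian_group_axioms P.abelian_group_axioms])
    (auto simp: additive_hom_def EndB_add)

lemma EndB_act_dual_basis:
  assumes s: "s \<in> carrier EndB" and p: "p \<in> carrier P" and a: "a \<in> carrier A"
  shows "s (act p a) = (\<Oplus>\<^bsub>P\<^esub> i\<in>{..<n}. act (s (act p (x i))) (E (y i \<otimes>\<^bsub>A\<^esub> a)))"
proof -
  have "act p a = act p (\<Oplus>\<^bsub>A\<^esub> i\<in>{..<n}. x i \<otimes>\<^bsub>A\<^esub> E (y i \<otimes>\<^bsub>A\<^esub> a))"
    using a by (simp add: dual_right)
  also have "\<dots> = (\<Oplus>\<^bsub>P\<^esub> i\<in>{..<n}. act (act p (x i)) (E (y i \<otimes>\<^bsub>A\<^esub> a)))"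
    using p a by (simp add: act_finsum_right Pi_def act_assoc cong: P.finsum_cong)
  finally show ?thesis
    using s p a by (simp add: EndB_finsum Pi_def EndB_act cong: P.finsum_cong)
qed

definition end_trace :: "('p \<Rightarrow> 'p) \<Rightarrow> 'p \<Rightarrow> 'p" where
  "end_trace s = (\<lambda>p\<in>carrier P. \<Oplus>\<^bsub>P\<^esub> l\<in>{..<n}. act (s (act p (x l))) (y l))"

lemma end_trace_apply:
  "p \<in> carrier P \<Longrightarrow> end_trace s p = (\<Oplus>\<^bsub>P\<^esub> l\<in>{..<n}. act (s (act p (x l))) (y l))"
  by (simp add: end_trace_def)

lemma end_trace_act:
  assumes s: "s \<in> carrier EndB" and p: "p \<in> carrier P" and a: "a \<in> carrier A"
  shows "end_trace s (act p a) = act (end_trace s p) a"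
proof -
  define w where "w i = s (act p (x i))" for i
  have w: "i < n \<Longrightarrow> w i \<in> carrier P" for i using s p by (simp add: w_def)
  have expand: "s (act p b) = (\<Oplus>\<^bsub>P\<^esub> i\<in>{..<n}. act (w i) (E (y i \<otimes>\<^bsub>A\<^esub> b)))" if "b \<in> carrier A" for b
    unfolding w_def by (rule EndB_act_dual_basis[OF s p that])
  have "end_trace s (act p a)
      = (\<Oplus>\<^bsub>P\<^esub> l\<in>{..<n}. act (\<Oplus>\<^bsub>P\<^esub> i\<in>{..<n}. act (w i) (E (y i \<otimes>\<^bsub>A\<^esub> (a \<otimes>\<^bsub>A\<^esub> x l)))) (y l))"
    using s p a w by (simp add: end_trace_apply act_assoc expand Pi_def cong: P.finsum_cong)
  also have "\<dots> = (\<Oplus>\<^bsub>P\<^esub> l\<in>{..<n}. \<Oplus>\<^bsub>P\<^esub> i\<in>{..<n}. act (w i) (E ((y i \<otimes>\<^bsub>A\<^esub> a) \<otimes>\<^bsub>A\<^esub> x l) \<otimes>\<^bsub>A\<^esub> y l))"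
    using a w by (simp add: act_finsum_left act_assoc A.m_assoc Pi_def cong: P.finsum_cong)
  also have "\<dots> = (\<Oplus>\<^bsub>P\<^esub> i\<in>{..<n}. act (w i) (\<Oplus>\<^bsub>A\<^esub> l\<in>{..<n}. E ((y i \<otimes>\<^bsub>A\<^esub> a) \<otimes>\<^bsub>A\<^esub> x l) \<otimes>\<^bsub>A\<^esub> y l))"
    using a w by (subst P.finsum_swap) (simp_all add: act_finsum_right Pi_def cong: P.finsum_cong)
  also have "\<dots> = (\<Oplus>\<^bsub>P\<^esub> i\<in>{..<n}. act (act (w i) (y i)) a)"
    using a w by (simp add: dual_left act_assoc cong: P.finsum_cong)
  also have "\<dots> = act (end_trace s p) a"
    using a w p by (simp add: act_finsum_left end_trace_apply w_def Pi_def)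
  finally show ?thesis .
qed

lemma end_trace_closed:
  assumes s: "s \<in> carrier EndB"
  shows "end_trace s \<in> carrier EndA"
  unfolding carrier_end_ring rmod_hom_def
proof (intro conjI ballI)
  show "end_trace s \<in> carrier P \<rightarrow> carrier P"
    using s by (auto simp: end_trace_apply intro: P.finsum_closed)
  show "end_trace s \<in> extensional (carrier P)"
    by (simp add: end_trace_def)
  show "end_trace s (act p a) = act (end_trace s p) a" if "p \<in> carrier P" "a \<in> carrier A" for p a
    using end_trace_act[OF s that] .
  show "end_trace s (p \<oplus>\<^bsub>P\<^esub> q) = end_trace s p \<oplus>\<^bsub>P\<^esub> end_trace s q"
    if p: "p \<in> carrier P" and q: "q \<in> carrier P" for p q
    using s p q by (simp add: end_trace_apply act_add_left EndB_add P.finsum_addf Pi_def cong: P.finsum_cong)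
qed

lemma end_trace_closed_EndB: "s \<in> carrier EndB \<Longrightarrow> end_trace s \<in> carrier EndB"
  using end_trace_closed EndA_subset_EndB by blast

lemma end_trace_add:
  assumes s: "s \<in> carrier EndB" and s': "s' \<in> carrier EndB"
  shows "end_trace (s \<oplus>\<^bsub>EndB\<^esub> s') = end_trace s \<oplus>\<^bsub>EndB\<^esub> end_trace s'"
proof (rule end_ring_eqI)
  interpret EndB: ring EndB by (rule ring_EndB)
  show "end_trace (s \<oplus>\<^bsub>EndB\<^esub> s') \<in> carrier EndB" "end_trace s \<oplus>\<^bsub>EndB\<^esub> end_trace s' \<in> carrier EndB"
    using s s' by (simp_all add: end_trace_closed_EndB)
  show "end_trace (s \<oplus>\<^bsub>EndB\<^esub> s') p = (end_trace s \<oplus>\<^bsub>EndB\<^esub> end_trace s') p" if p: "p \<in> carrier P" for p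
    using s s' p
    by (simp add: end_trace_apply end_ring_add_apply act_add_left P.finsum_addf Pi_def cong: P.finsum_cong)
qed

lemma end_trace_mult_left:
  assumes t: "t \<in> carrier EndA" and s: "s \<in> carrier EndB"
  shows "end_trace (t \<otimes>\<^bsub>EndB\<^esub> s) = t \<otimes>\<^bsub>EndB\<^esub> end_trace s"
proof (rule end_ring_eqI)
  interpret EndB: ring EndB by (rule ring_EndB)
  have t': "t \<in> carrier EndB" using t EndA_subset_EndB by blast
  show "end_trace (t \<otimes>\<^bsub>EndB\<^esub> s) \<in> carrier EndB" "t \<otimes>\<^bsub>EndB\<^esub> end_trace s \<in> carrier EndB"
    using s t' by (simp_all add: end_trace_closed_EndB)
  show "end_trace (t \<otimes>\<^bsub>EndB\<^esub> s) p = (t \<otimes>\<^bsub>EndB\<^esub> end_trace s) p" if p: "p \<in> carrier P" for p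
    using s t t' p
    by (simp add: end_trace_apply end_ring_mult_apply EndA_act EndB_finsum Pi_def cong: P.finsum_cong)
qed

lemma end_trace_mult_right:
  assumes t: "t \<in> carrier EndA" and s: "s \<in> carrier EndB"
  shows "end_trace (s \<otimes>\<^bsub>EndB\<^esub> t) = end_trace s \<otimes>\<^bsub>EndB\<^esub> t"
proof (rule end_ring_eqI)
  interpret EndB: ring EndB by (rule ring_EndB)
  have t': "t \<in> carrier EndB" using t EndA_subset_EndB by blast
  show "end_trace (s \<otimes>\<^bsub>EndB\<^esub> t) \<in> carrier EndB" "end_trace s \<otimes>\<^bsub>EndB\<^esub> t \<in> carrier EndB"
    using s t' by (simp_all add: end_trace_closed_EndB)
  show "end_trace (s \<otimes>\<^bsub>EndB\<^esub> t) p = (end_trace s \<otimes>\<^bsub>EndB\<^esub> t) p" if p: "p \<in> carrier P" for p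
    using s t t' p by (simp add: end_trace_apply end_ring_mult_apply EndA_act cong: P.finsum_cong)
qed

end

locale frobenius_progenerator = frobenius_module A B E n x y P act
  for A :: "'a ring" and B E n x y and P :: "'p ring" and act +
  fixes m :: nat and pp :: "nat \<Rightarrow> 'p" and phi :: "nat \<Rightarrow> 'p \<Rightarrow> 'a"
    and g :: nat and qq :: "nat \<Rightarrow> 'p" and psi :: "nat \<Rightarrow> 'p \<Rightarrow> 'a"
  assumes pp_closed: "\<And>j. j < m \<Longrightarrow> pp j \<in> carrier P"
    and phi_hom: "\<And>j. j < m \<Longrightarrow> rmod_hom A P act A (\<otimes>\<^bsub>A\<^esub>) (phi j)"
    and projective_basis: "\<And>p. p \<in> carrier P \<Longrightarrow> (\<Oplus>\<^bsub>P\<^esub> j\<in>{..<m}. act (pp j) (phi j p)) = p"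
    and qq_closed: "\<And>k. k < g \<Longrightarrow> qq k \<in> carrier P"
    and psi_hom: "\<And>k. k < g \<Longrightarrow> rmod_hom A P act A (\<otimes>\<^bsub>A\<^esub>) (psi k)"
    and generator_one: "(\<Oplus>\<^bsub>A\<^esub> k\<in>{..<g}. psi k (qq k)) = \<one>\<^bsub>A\<^esub>"
begin

declare pp_closed [simp] qq_closed [simp]

lemma phi_closed [simp]: "j < m \<Longrightarrow> p \<in> carrier P \<Longrightarrow> phi j p \<in> carrier A"
  using phi_hom unfolding rmod_hom_def by blast

lemma psi_closed [simp]: "k < g \<Longrightarrow> p \<in> carrier P \<Longrightarrow> psi k p \<in> carrier A"
  using psi_hom unfolding rmod_hom_def by blast

lemma phi_add: "j < m \<Longrightarrow> p \<in> carrier P \<Longrightarrow> q \<in> carrier P \<Longrightarrow> phi j (p \<oplus>\<^bsub>P\<^esub> q) = phi j p \<oplus>\<^bsub>A\<^esub> phi j q"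
  using phi_hom unfolding rmod_hom_def by blast

lemma psi_add: "k < g \<Longrightarrow> p \<in> carrier P \<Longrightarrow> q \<in> carrier P \<Longrightarrow> psi k (p \<oplus>\<^bsub>P\<^esub> q) = psi k p \<oplus>\<^bsub>A\<^esub> psi k q"
  using psi_hom unfolding rmod_hom_def by blast

lemma phi_act: "j < m \<Longrightarrow> p \<in> carrier P \<Longrightarrow> a \<in> carrier A \<Longrightarrow> phi j (act p a) = phi j p \<otimes>\<^bsub>A\<^esub> a"
  using phi_hom unfolding rmod_hom_def by blast

lemma psi_act: "k < g \<Longrightarrow> p \<in> carrier P \<Longrightarrow> a \<in> carrier A \<Longrightarrow> psi k (act p a) = psi k p \<otimes>\<^bsub>A\<^esub> a"
  using psi_hom unfolding rmod_hom_def by blast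

lemma generator_collapse:
  assumes h: "additive_hom A P h" and z: "z \<in> carrier A"
  shows "(\<Oplus>\<^bsub>P\<^esub> k\<in>{..<g}. h (psi k (qq k) \<otimes>\<^bsub>A\<^esub> z)) = h z"
proof -
  have "additive_hom A P (\<lambda>u. h (u \<otimes>\<^bsub>A\<^esub> z))"
    using h z unfolding additive_hom_def by (auto simp: A.l_distr)
  then have "(\<Oplus>\<^bsub>P\<^esub> k\<in>{..<g}. h (psi k (qq k) \<otimes>\<^bsub>A\<^esub> z)) = h ((\<Oplus>\<^bsub>A\<^esub> k\<in>{..<g}. psi k (qq k)) \<otimes>\<^bsub>A\<^esub> z)"
    by (subst additive_hom_finsum[OF A.abelian_group_axioms P.abelian_group_axioms]) auto
  then show ?thesis using z by (simp add: generator_one)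
qed

definition basis_index :: "(nat \<times> nat \<times> nat) set" where
  "basis_index = {..<m} \<times> {..<n} \<times> {..<g}"

definition end_dual_x :: "nat \<times> nat \<times> nat \<Rightarrow> 'p \<Rightarrow> 'p" where
  "end_dual_x = (\<lambda>(j, i, k). \<lambda>q\<in>carrier P. act (pp j) (x i \<otimes>\<^bsub>A\<^esub> E (psi k q)))"

definition end_dual_y :: "nat \<times> nat \<times> nat \<Rightarrow> 'p \<Rightarrow> 'p" where
  "end_dual_y = (\<lambda>(j, i, k). \<lambda>q\<in>carrier P. act (qq k) (E (y i \<otimes>\<^bsub>A\<^esub> phi j q)))"

lemma end_dual_x_closed:
  assumes "t \<in> basis_index"
  shows "end_dual_x t \<in> carrier EndB"
proof -
  obtain j i k where t: "t = (j, i, k)" "j < m" "i < n" "k < g"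
    using assms unfolding basis_index_def by auto
  show ?thesis
    unfolding carrier_end_ring rmod_hom_def t(1)
    using t(2-) by (auto simp: end_dual_x_def psi_add psi_act E_add E_right A.r_distr A.m_assoc
        act_assoc act_add_right)
qed

lemma end_dual_y_closed:
  assumes "t \<in> basis_index"
  shows "end_dual_y t \<in> carrier EndB"
proof -
  obtain j i k where t: "t = (j, i, k)" "j < m" "i < n" "k < g"
    using assms unfolding basis_index_def by auto
  show ?thesis
    unfolding carrier_end_ring rmod_hom_def t(1)
    using t(2-) by (auto simp: end_dual_y_def phi_add phi_act E_add E_right A.r_distr
        A.m_assoc[symmetric] act_assoc act_add_right)
qed

lemma end_dual_sum:
  assumes w: "w \<in> carrier P" and b: "b \<in> carrier A"
  shows "(\<Oplus>\<^bsub>P\<^esub> t\<in>basis_index. end_dual_x t (act (end_dual_y t w) b)) = act w (E b)"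
proof -
  define c where "c j i = E (y i \<otimes>\<^bsub>A\<^esub> phi j w) \<otimes>\<^bsub>A\<^esub> b" for j i
  define F where "F j i k = act (pp j) (x i \<otimes>\<^bsub>A\<^esub> E (psi k (qq k) \<otimes>\<^bsub>A\<^esub> c j i))" for j i k
  have c: "j < m \<Longrightarrow> i < n \<Longrightarrow> c j i \<in> carrier A" for j i
    using w b by (simp add: c_def)
  have F: "j < m \<Longrightarrow> i < n \<Longrightarrow> k < g \<Longrightarrow> F j i k \<in> carrier P" for j i k
    using c by (simp add: F_def)
  have summand: "end_dual_x (j, i, k) (act (end_dual_y (j, i, k) w) b) = F j i k"
    if "j < m" "i < n" "k < g" for j i k
    using that w b by (simp add: end_dual_x_def end_dual_y_def F_def c_def act_assoc psi_act)
  have collapse: "(\<Oplus>\<^bsub>P\<^esub> k\<in>{..<g}. F j i k) = act (pp j) (x i \<otimes>\<^bsub>A\<^esub> E (c j i))"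
    if "j < m" "i < n" for j i
    unfolding F_def
  proof (rule generator_collapse)
    show "additive_hom A P (\<lambda>u. act (pp j) (x i \<otimes>\<^bsub>A\<^esub> E u))"
      using that unfolding additive_hom_def by (auto simp: E_add A.r_distr act_add_right)
  qed (use that c in auto)
  have "(\<Oplus>\<^bsub>P\<^esub> t\<in>basis_index. end_dual_x t (act (end_dual_y t w) b))
      = finsum P (\<lambda>(j, i, k). F j i k) ({..<m} \<times> {..<n} \<times> {..<g})"
    unfolding basis_index_def by (intro P.finsum_cong') (auto simp: summand F)
  also have "\<dots> = (\<Oplus>\<^bsub>P\<^esub> j\<in>{..<m}. finsum P (\<lambda>(i, k). F j i k) ({..<n} \<times> {..<g}))"
    using F by (subst P.finsum_Times) (auto intro!: P.finsum_closed)
  also have "\<dots> = (\<Oplus>\<^bsub>P\<^esub> j\<in>{..<m}. \<Oplus>\<^bsub>P\<^esub> i\<in>{..<n}. \<Oplus>\<^bsub>P\<^esub> k\<in>{..<g}. F j i k)"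
    using F by (intro P.finsum_cong' P.finsum_Times) (auto intro!: P.finsum_closed)
  also have "\<dots> = (\<Oplus>\<^bsub>P\<^esub> j\<in>{..<m}. act (pp j) (\<Oplus>\<^bsub>A\<^esub> i\<in>{..<n}. x i \<otimes>\<^bsub>A\<^esub> E (c j i)))"
    using c by (simp add: collapse act_finsum_right Pi_def cong: P.finsum_cong)
  also have "\<dots> = (\<Oplus>\<^bsub>P\<^esub> j\<in>{..<m}. act (act (pp j) (phi j w)) (E b))"
    using w b by (simp add: c_def dual_right_E_E act_assoc cong: P.finsum_cong)
  also have "\<dots> = act w (E b)"
    using w b by (simp add: act_finsum_left[symmetric] projective_basis Pi_def)
  finally show ?thesis .
qed

lemma end_trace_dual_left:
  assumes s: "s \<in> carrier EndB"
  shows "(\<Oplus>\<^bsub>EndB\<^esub> t\<in>basis_index. end_trace (s \<otimes>\<^bsub>EndB\<^esub> end_dual_x t) \<otimes>\<^bsub>EndB\<^esub> end_dual_y t) = s"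
proof -
  interpret EndB: ring EndB by (rule ring_EndB)
  have I: "finite basis_index" by (simp add: basis_index_def)
  have summand: "end_trace (s \<otimes>\<^bsub>EndB\<^esub> end_dual_x t) \<otimes>\<^bsub>EndB\<^esub> end_dual_y t \<in> carrier EndB"
    if "t \<in> basis_index" for t
    using that s by (simp add: end_dual_x_closed end_dual_y_closed end_trace_closed_EndB)
  show ?thesis
  proof (rule end_ring_eqI)
    show "(\<Oplus>\<^bsub>EndB\<^esub> t\<in>basis_index. end_trace (s \<otimes>\<^bsub>EndB\<^esub> end_dual_x t) \<otimes>\<^bsub>EndB\<^esub> end_dual_y t) \<in> carrier EndB"
      using summand by (auto intro: EndB.finsum_closed)
    fix p assume p: "p \<in> carrier P"
    let ?X = end_dual_x and ?Y = end_dual_y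
    have X: "t \<in> basis_index \<Longrightarrow> ?X t \<in> carrier EndB" and Y: "t \<in> basis_index \<Longrightarrow> ?Y t \<in> carrier EndB"
      for t by (simp_all add: end_dual_x_closed end_dual_y_closed)
    have "(\<Oplus>\<^bsub>EndB\<^esub> t\<in>basis_index. end_trace (s \<otimes>\<^bsub>EndB\<^esub> ?X t) \<otimes>\<^bsub>EndB\<^esub> ?Y t) p
        = (\<Oplus>\<^bsub>P\<^esub> t\<in>basis_index. \<Oplus>\<^bsub>P\<^esub> l\<in>{..<n}. act (s (?X t (act (?Y t p) (x l)))) (y l))"
      using s p X Y summand I
      by (simp add: end_ring_finsum_apply[OF module_B] end_ring_mult_apply end_trace_apply Pi_def
          cong: P.finsum_cong)
    also have "\<dots> = (\<Oplus>\<^bsub>P\<^esub> l\<in>{..<n}. act (s (\<Oplus>\<^bsub>P\<^esub> t\<in>basis_index. ?X t (act (?Y t p) (x l)))) (y l))"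
      using s p X Y I
      by (subst P.finsum_swap) (simp_all add: EndB_finsum act_finsum_left Pi_def cong: P.finsum_cong)
    also have "\<dots> = (\<Oplus>\<^bsub>P\<^esub> l\<in>{..<n}. act (s p) (E (x l) \<otimes>\<^bsub>A\<^esub> y l))"
      using s p by (simp add: end_dual_sum EndB_act act_assoc cong: P.finsum_cong)
    also have "\<dots> = s p"
      using s p dual_left[of "\<one>\<^bsub>A\<^esub>"]
      by (simp add: act_finsum_right[symmetric] Pi_def cong: A.finsum_cong)
    finally show "(\<Oplus>\<^bsub>EndB\<^esub> t\<in>basis_index. end_trace (s \<otimes>\<^bsub>EndB\<^esub> ?X t) \<otimes>\<^bsub>EndB\<^esub> ?Y t) p = s p" .
  qed (rule s)
qed

lemma end_trace_dual_right:
  assumes s: "s \<in> carrier EndB"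
  shows "(\<Oplus>\<^bsub>EndB\<^esub> t\<in>basis_index. end_dual_x t \<otimes>\<^bsub>EndB\<^esub> end_trace (end_dual_y t \<otimes>\<^bsub>EndB\<^esub> s)) = s"
proof -
  interpret EndB: ring EndB by (rule ring_EndB)
  have I: "finite basis_index" by (simp add: basis_index_def)
  have summand: "end_dual_x t \<otimes>\<^bsub>EndB\<^esub> end_trace (end_dual_y t \<otimes>\<^bsub>EndB\<^esub> s) \<in> carrier EndB"
    if "t \<in> basis_index" for t
    using that s by (simp add: end_dual_x_closed end_dual_y_closed end_trace_closed_EndB)
  show ?thesis
  proof (rule end_ring_eqI)
    show "(\<Oplus>\<^bsub>EndB\<^esub> t\<in>basis_index. end_dual_x t \<otimes>\<^bsub>EndB\<^esub> end_trace (end_dual_y t \<otimes>\<^bsub>EndB\<^esub> s)) \<in> carrier EndB"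
      using summand by (auto intro: EndB.finsum_closed)
    fix p assume p: "p \<in> carrier P"
    let ?X = end_dual_x and ?Y = end_dual_y
    have X: "t \<in> basis_index \<Longrightarrow> ?X t \<in> carrier EndB" and Y: "t \<in> basis_index \<Longrightarrow> ?Y t \<in> carrier EndB"
      for t by (simp_all add: end_dual_x_closed end_dual_y_closed)
    have "(\<Oplus>\<^bsub>EndB\<^esub> t\<in>basis_index. ?X t \<otimes>\<^bsub>EndB\<^esub> end_trace (?Y t \<otimes>\<^bsub>EndB\<^esub> s)) p
        = (\<Oplus>\<^bsub>P\<^esub> t\<in>basis_index. \<Oplus>\<^bsub>P\<^esub> l\<in>{..<n}. ?X t (act (?Y t (s (act p (x l)))) (y l)))"
      using s p X Y summand I
      by (simp add: end_ring_finsum_apply[OF module_B] end_ring_mult_apply end_trace_apply EndB_finsum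
          Pi_def cong: P.finsum_cong)
    also have "\<dots> = (\<Oplus>\<^bsub>P\<^esub> l\<in>{..<n}. act (s (act p (x l))) (E (y l)))"
      using s p X Y I by (subst P.finsum_swap) (simp_all add: end_dual_sum Pi_def cong: P.finsum_cong)
    also have "\<dots> = s p"
      using EndB_act_dual_basis[OF s p, of "\<one>\<^bsub>A\<^esub>"] s p by (simp cong: P.finsum_cong)
    finally show "(\<Oplus>\<^bsub>EndB\<^esub> t\<in>basis_index. ?X t \<otimes>\<^bsub>EndB\<^esub> end_trace (?Y t \<otimes>\<^bsub>EndB\<^esub> s)) p = s p" .
  qed (rule s)
qed

lemma frobenius_hom_end_trace: "frobenius_hom EndB (carrier EndA) end_trace"
proof (rule frobenius_homI[OF ring_EndB])
  show "finite basis_index" by (simp add: basis_index_def)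
qed (use end_trace_closed end_trace_add end_trace_mult_left end_trace_mult_right EndA_subset_EndB
    end_dual_x_closed end_dual_y_closed end_trace_dual_left end_trace_dual_right in auto)

end

lemma (in frobenius_system) frobenius_progenerator_if_progenerator:
  assumes "progenerator A P act"
  obtains m pp phi g qq psi where "frobenius_progenerator A B E n x y P act m pp phi g qq psi"
proof -
  have module: "right_module A P act"
    using assms unfolding progenerator_def by blast
  obtain m :: nat and pp phi where pp: "\<forall>j<m. pp j \<in> carrier P \<and> rmod_hom A P act A (\<otimes>\<^bsub>A\<^esub>) (phi j)"
    and basis: "\<forall>p\<in>carrier P. p = (\<Oplus>\<^bsub>P\<^esub> j\<in>{..<m}. act (pp j) (phi j p))"
    using assms unfolding progenerator_def fg_projective_def by blast
  obtain g :: nat and psi where psi: "\<forall>k<g. rmod_hom A P act A (\<otimes>\<^bsub>A\<^esub>) (psi k)"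
    and onto: "\<forall>r\<in>carrier A. \<exists>q. (\<forall>k<g. q k \<in> carrier P) \<and> r = (\<Oplus>\<^bsub>A\<^esub> k\<in>{..<g}. psi k (q k))"
    using assms unfolding progenerator_def generator_def by blast
  obtain qq where qq: "\<forall>k<g. qq k \<in> carrier P" and one: "\<one>\<^bsub>A\<^esub> = (\<Oplus>\<^bsub>A\<^esub> k\<in>{..<g}. psi k (qq k))"
    using onto A.one_closed by blast
  have "frobenius_progenerator A B E n x y P act m pp phi g qq psi"
    by (intro frobenius_progenerator.intro frobenius_module.intro frobenius_progenerator_axioms.intro
        frobenius_module_axioms.intro frobenius_system_axioms module)
      (use pp basis psi qq one in auto)
  then show thesis by (rule that)
qed

theorem mainTheorem15:
  fixes A :: "'a ring" and B :: "'a set" and E :: "'a \<Rightarrow> 'a"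
    and P :: "'p ring" and act :: "'p \<Rightarrow> 'a \<Rightarrow> 'p"
  assumes "frobenius_ext A B"
    and "frobenius_hom A B E"
    and "E ` carrier A = B"
    and "progenerator A P act"
  shows "frobenius_ext (end_ring (A\<lparr>carrier := B\<rparr>) P act) (carrier (end_ring A P act))"
proof -
  have A: "ring A" and B: "subring B A"
    using assms(1) unfolding frobenius_ext_def by blast+
  obtain n x y where "frobenius_system A B E n x y"
    using frobenius_system_if_frobenius_hom[OF A B assms(2)] .
  then interpret frobenius_system A B E n x y .
  obtain m pp phi g qq psi where "frobenius_progenerator A B E n x y P act m pp phi g qq psi"
    using frobenius_progenerator_if_progenerator[OF assms(4)] .
  then interpret frobenius_progenerator A B E n x y P act m pp phi g qq psi .
  show ?thesis
    using frobenius_ext_if_frobenius_hom[OF ring_EndB subring_end_ring[OF module subring]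
        frobenius_hom_end_trace] .
qed

end
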